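(* Let $\mathbb{F}$ be a field of characteristic $2$ with at least $4$ elements, and let $B\in M_3(\mathbb{F})$ be a non-derogative matrix with trace $u_2$. Then for every $a\in\mathbb{F}$ with $a\neq u_2$ and $a\neq u_2+1$, there exist $N,D\in M_3(\mathbb{F})$ with $B=N+D$, $N^2=0$, and $D$ diagonalizable with eigenvalues $a$, $a+1$, $u_2+1$.
   Context: A square matrix is non-derogative if its minimal polynomial equals its characteristic polynomial. A matrix $D\in M_n(\mathbb{F})$ is diagonalizable if there exists an invertible $U\in M_n(\mathbb{F})$ such that $U^{-1}DU$ is diagonal. *)

theory Defs
  imports "Jordan_Normal_Form.Char_Poly"
begin

definition mat_trace :: "'a :: comm_ring_1 mat \<Rightarrow> 'a" where
  "mat_trace A = (\<Sum>i<dim_row A. A $$ (i,i))"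

definition mat_poly_eval :: "'a :: comm_ring_1 poly \<Rightarrow> 'a mat \<Rightarrow> 'a mat" where
  "mat_poly_eval p A = mat (dim_row A) (dim_col A)
     (\<lambda>(i,j). \<Sum>k\<le>degree p. coeff p k * (A ^\<^sub>m k) $$ (i,j))"

definition is_minimal_polynomial :: "'a :: field mat \<Rightarrow> 'a poly \<Rightarrow> bool" where
  "is_minimal_polynomial A p \<longleftrightarrow>
     lead_coeff p = 1 \<and>
     mat_poly_eval p A = 0\<^sub>m (dim_row A) (dim_col A) \<and>
     (\<forall>q. q \<noteq> 0 \<longrightarrow> mat_poly_eval q A = 0\<^sub>m (dim_row A) (dim_col A) \<longrightarrow> degree p \<le> degree q)"

definition non_derogative :: "'a :: field mat \<Rightarrow> bool" where
  "non_derogative A \<longleftrightarrow> is_minimal_polynomial A (char_poly A)"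

end

theory Submission
  imports Defs
begin

text \<open>
  A non-derogative 3 \<times> 3 matrix B has a cyclic vector, so it is similar to a companion matrix
  C, whose last column is (c0, c1, tr B). In characteristic 2 the prescribed eigenvalues sum to
  a + (a + 1) + (u2 + 1) = u2, so the companion matrix C' of (x - a)(x - a - 1)(x - u2 - 1)
  differs from C only in the two upper entries of the last column; hence (C - C')^2 = 0.
  The eigenvalues are distinct, so C' is diagonalised by a Vandermonde matrix, and conjugating
  C = (C - C') + C' back gives N and D.

  For the cyclic vector, take v with v, Bv independent (B is not scalar). If v is not cyclic
  then p(B) = B^2 - sB - r kills span(v, Bv) for suitable r, s, but not the whole space.
  In a basis v, Bv, w with p(B)w \<noteq> 0 the matrix of B is block triangular, and there a cyclic
  vector of the form w + x v + y Bv is found explicitly.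
\<close>

definition vec3 :: "'a \<Rightarrow> 'a \<Rightarrow> 'a \<Rightarrow> 'a vec" where
  "vec3 x y z = vec 3 (\<lambda>i. if i = 0 then x else if i = 1 then y else z)"

definition mat3 :: "'a \<Rightarrow> 'a \<Rightarrow> 'a \<Rightarrow> 'a \<Rightarrow> 'a \<Rightarrow> 'a \<Rightarrow> 'a \<Rightarrow> 'a \<Rightarrow> 'a \<Rightarrow> 'a mat" where
  "mat3 a b c d e f g h k = mat 3 3 (\<lambda>(i,j).
     if i = 0 then (if j = 0 then a else if j = 1 then b else c)
     else if i = 1 then (if j = 0 then d else if j = 1 then e else f)
     else (if j = 0 then g else if j = 1 then h else k))"

lemma less_3_cases: "(i::nat) < 3 \<Longrightarrow> i = 0 \<or> i = 1 \<or> i = 2"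
  by auto

lemma sum_lessThan_3: "(\<Sum>i<3. f i) = f 0 + f 1 + f (2::nat)"
  by (simp add: numeral_3_eq_3 lessThan_Suc numeral_2_eq_2 ac_simps)

lemma sum_atLeast0LessThan_3: "(\<Sum>i\<in>{0..<3}. f i) = f 0 + f 1 + f (2::nat)"
  by (simp add: atLeast0LessThan sum_lessThan_3)

lemma vec3_carrier [simp]: "vec3 x y z \<in> carrier_vec 3"
  and dim_vec_vec3 [simp]: "dim_vec (vec3 x y z) = 3"
  by (simp_all add: vec3_def)

lemma mat3_carrier [simp]: "mat3 a b c d e f g h k \<in> carrier_mat 3 3"
  and dim_mat3 [simp]: "dim_row (mat3 a b c d e f g h k) = 3" "dim_col (mat3 a b c d e f g h k) = 3"
  by (simp_all add: mat3_def)

lemma vec3_index [simp]: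
  "vec3 x y z $ 0 = x" "vec3 x y z $ 1 = y" "vec3 x y z $ 2 = z"
  "vec3 x y z $ Suc 0 = y" "vec3 x y z $ Suc (Suc 0) = z"
  by (simp_all add: vec3_def)

lemma mat3_index [simp]:
  "mat3 a b c d e f g h k $$ (0,0) = a" "mat3 a b c d e f g h k $$ (0,1) = b"
  "mat3 a b c d e f g h k $$ (0,2) = c" "mat3 a b c d e f g h k $$ (1,0) = d"
  "mat3 a b c d e f g h k $$ (1,1) = e" "mat3 a b c d e f g h k $$ (1,2) = f"
  "mat3 a b c d e f g h k $$ (2,0) = g" "mat3 a b c d e f g h k $$ (2,1) = h"
  "mat3 a b c d e f g h k $$ (2,2) = k"
  "mat3 a b c d e f g h k $$ (0,Suc 0) = b" "mat3 a b c d e f g h k $$ (0,Suc (Suc 0)) = c"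
  "mat3 a b c d e f g h k $$ (Suc 0,0) = d" "mat3 a b c d e f g h k $$ (Suc 0,Suc 0) = e"
  "mat3 a b c d e f g h k $$ (Suc 0,Suc (Suc 0)) = f"
  "mat3 a b c d e f g h k $$ (Suc (Suc 0),0) = g" "mat3 a b c d e f g h k $$ (Suc (Suc 0),Suc 0) = h"
  "mat3 a b c d e f g h k $$ (Suc (Suc 0),Suc (Suc 0)) = k"
  by (simp_all add: mat3_def)

lemma vec3_cases [cases set: carrier_vec]:
  assumes "u \<in> carrier_vec 3"
  obtains x y z where "u = vec3 x y z"
proof
  show "u = vec3 (u$0) (u$1) (u$2)"
    using assms by (intro eq_vecI) (auto simp: vec3_def dest!: less_3_cases)
qed

lemma mat3_cases [cases set: carrier_mat]:
  assumes "A \<in> carrier_mat 3 3"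
  obtains a b c d e f g h k where "A = mat3 a b c d e f g h k"
proof
  show "A = mat3 (A$$(0,0)) (A$$(0,1)) (A$$(0,2)) (A$$(1,0)) (A$$(1,1)) (A$$(1,2))
    (A$$(2,0)) (A$$(2,1)) (A$$(2,2))"
    using assms by (intro eq_matI) (auto simp: mat3_def dest!: less_3_cases)
qed

lemma vec3_eq_iff [simp]: "vec3 x y z = vec3 x' y' z' \<longleftrightarrow> x = x' \<and> y = y' \<and> z = z'"
  by (metis vec3_index(1-3))

lemma mat3_eq_iff [simp]: "mat3 a b c d e f g h k = mat3 a' b' c' d' e' f' g' h' k' \<longleftrightarrow>
  a = a' \<and> b = b' \<and> c = c' \<and> d = d' \<and> e = e' \<and> f = f' \<and> g = g' \<and> h = h' \<and> k = k'"
  by (metis mat3_index(1-9))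

lemma mat3_mult [simp]: "mat3 a b c d e f g h k * mat3 a' b' c' d' e' f' g' h' k' =
  mat3 (a*a'+b*d'+c*g') (a*b'+b*e'+c*h') (a*c'+b*f'+c*k')
       (d*a'+e*d'+f*g') (d*b'+e*e'+f*h') (d*c'+e*f'+f*k')
       (g*a'+h*d'+k*g') (g*b'+h*e'+k*h') (g*c'+h*f'+k*k')"
  by (rule eq_matI; auto simp: scalar_prod_def sum_atLeast0LessThan_3 dest!: less_3_cases)
     (auto simp: mat3_def row_def col_def)

lemma mat3_mult_vec3 [simp]: "mat3 a b c d e f g h k *\<^sub>v vec3 x y z =
  vec3 (a*x+b*y+c*z) (d*x+e*y+f*z) (g*x+h*y+k*z)"
  by (rule eq_vecI; auto simp: scalar_prod_def sum_atLeast0LessThan_3 dest!: less_3_cases)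
     (auto simp: mat3_def vec3_def row_def)

lemma mat3_add [simp]: "mat3 a b c d e f g h k + mat3 a' b' c' d' e' f' g' h' k' =
  mat3 (a+a') (b+b') (c+c') (d+d') (e+e') (f+f') (g+g') (h+h') (k+k')"
  and mat3_minus [simp]: "mat3 a b c d e f g h k - mat3 a' b' c' d' e' f' g' h' k' =
  mat3 (a-a') (b-b') (c-c') (d-d') (e-e') (f-f') (g-g') (h-h') (k-k')"
  and smult_mat3 [simp]: "r \<cdot>\<^sub>m mat3 a b c d e f g h k =
  mat3 (r*a) (r*b) (r*c) (r*d) (r*e) (r*f) (r*g) (r*h) (r*k)"
  by (rule eq_matI; auto simp: mat3_def dest!: less_3_cases)+

lemma vec3_add [simp]: "vec3 x y z + vec3 x' y' z' = vec3 (x+x') (y+y') (z+z')"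
  and smult_vec3 [simp]: "r \<cdot>\<^sub>v vec3 x y z = vec3 (r*x) (r*y) (r*z)"
  by (rule eq_vecI; auto simp: vec3_def dest!: less_3_cases)+

lemma one_mat_3: "1\<^sub>m 3 = mat3 1 0 0 0 1 0 0 0 1"
  and zero_mat_3: "0\<^sub>m 3 3 = mat3 0 0 0 0 0 0 0 0 0"
  and mat_diag_3: "mat_diag 3 f = mat3 (f 0) 0 0 0 (f 1) 0 0 0 (f 2)"
  by (rule eq_matI; auto simp: mat3_def mat_diag_def dest!: less_3_cases)+

lemma zero_vec_3: "0\<^sub>v 3 = vec3 0 0 0"
  by (rule eq_vecI; auto simp: vec3_def dest!: less_3_cases)

lemma mat_of_cols_vec3:
  "mat_of_cols 3 [vec3 a d g, vec3 b e h, vec3 c f k] = mat3 a b c d e f g h k"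
  by (rule eq_matI; auto simp: mat3_def vec3_def mat_of_cols_def dest!: less_3_cases)

lemma det_2: assumes A: "A \<in> carrier_mat 2 2"
  shows "det A = A$$(0,0) * A$$(1,1) - A$$(1,0) * A$$(0,1)"
proof -
  have "det A = (\<Sum>i<2. A $$ (i,0) * cofactor A i 0)"
    by (rule laplace_expansion_column[OF A]) auto
  also have "\<dots> = A$$(0,0) * A$$(1,1) - A$$(1,0) * A$$(0,1)"
    unfolding cofactor_def using A
    by (simp add: numeral_2_eq_2 det_single mat_delete_carrier mat_delete_def)
  finally show ?thesis .
qed

lemma det_mat3:
  "det (mat3 a b c d e f g h k) = a*(e*k - f*h) - b*(d*k - f*g) + c*(d*h - e*g)"
proof -
  have "det (mat3 a b c d e f g h k) =
      (\<Sum>i<3. mat3 a b c d e f g h k $$ (i,0) * cofactor (mat3 a b c d e f g h k) i 0)"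
    by (rule laplace_expansion_column) auto
  then show ?thesis
    unfolding sum_lessThan_3 cofactor_def
    by (subst (asm) (1 2 3) det_2) (auto simp: mat_delete_def mat3_def algebra_simps numeral_2_eq_2)
qed

lemma mat_of_cols_3_carrier [simp]: "mat_of_cols 3 [u, w, t] \<in> carrier_mat 3 3"
  using mat_of_cols_carrier(1)[of 3 "[u, w, t]"] by (simp add: numeral_3_eq_3)

lemmas mat3_simps = one_mat_3 zero_mat_3 zero_vec_3 mat_of_cols_vec3 det_mat3 algebra_simps

lemma mult_mat_of_cols:
  assumes "A \<in> carrier_mat n m" "set ws \<subseteq> carrier_vec m"
  shows "A * mat_of_cols m ws = mat_of_cols n (map (\<lambda>w. A *\<^sub>v w) ws)"
  using assms by (intro eq_matI) (auto simp: mat_of_cols_index subset_code(1))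

lemma mat_of_cols_mult_vec3:
  fixes u :: "'a::comm_ring_1 vec"
  assumes "u \<in> carrier_vec 3" "w \<in> carrier_vec 3" "t \<in> carrier_vec 3"
  shows "mat_of_cols 3 [u, w, t] *\<^sub>v vec3 a b c = a \<cdot>\<^sub>v u + b \<cdot>\<^sub>v w + c \<cdot>\<^sub>v t"
proof -
  from assms obtain x y z x' y' z' x'' y'' z''
    where "u = vec3 x y z" "w = vec3 x' y' z'" "t = vec3 x'' y'' z''"
    by (metis vec3_cases)
  then show ?thesis by (simp add: mat3_simps)
qed

lemma mat_trace_mult_comm:
  fixes A :: "'a::comm_ring_1 mat"
  assumes "A \<in> carrier_mat n m" "B \<in> carrier_mat m n"
  shows "mat_trace (A * B) = mat_trace (B * A)"
proof -
  have "mat_trace (A * B) = (\<Sum>i<n. \<Sum>k<m. A $$ (i,k) * B $$ (k,i))"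
    using assms by (simp add: mat_trace_def scalar_prod_def atLeast0LessThan)
  also have "\<dots> = (\<Sum>k<m. \<Sum>i<n. B $$ (k,i) * A $$ (i,k))"
    by (subst sum.swap) (simp add: mult.commute)
  also have "\<dots> = mat_trace (B * A)"
    using assms by (simp add: mat_trace_def scalar_prod_def atLeast0LessThan)
  finally show ?thesis .
qed

lemma mat_trace_similar:
  fixes A :: "'a::comm_ring_1 mat"
  assumes "similar_mat A B"
  shows "mat_trace A = mat_trace B"
proof -
  from similar_matD[OF assms] obtain n P Q where
    carr: "{A, B, P, Q} \<subseteq> carrier_mat n n" and QP: "Q * P = 1\<^sub>m n" and A: "A = P * B * Q"
    by blast
  have "mat_trace A = mat_trace (P * (B * Q))"
    unfolding A using carr by (simp add: assoc_mult_mat[of P n n B n Q n])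
  also have "\<dots> = mat_trace (B * Q * P)"
    using carr by (intro mat_trace_mult_comm) auto
  also have "\<dots> = mat_trace B"
    using carr by (auto simp: QP assoc_mult_mat[of B n n Q n P n])
  finally show ?thesis .
qed

lemma det_nonzero_imp_inverse:
  fixes P :: "'a::field mat"
  assumes "P \<in> carrier_mat n n" "det P \<noteq> 0"
  obtains Q where "Q \<in> carrier_mat n n" "P * Q = 1\<^sub>m n" "Q * P = 1\<^sub>m n"
  using det_non_zero_imp_unit[OF assms, of "()"] unfolding Units_def ring_mat_def by auto

lemma similar_mat_of_mult_eq:
  fixes A :: "'a::field mat"
  assumes carr: "A \<in> carrier_mat n n" "C \<in> carrier_mat n n" "P \<in> carrier_mat n n"
    and "det P \<noteq> 0" and AP: "A * P = P * C"
  shows "similar_mat A C"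
proof -
  obtain Q where Q: "Q \<in> carrier_mat n n" "P * Q = 1\<^sub>m n" "Q * P = 1\<^sub>m n"
    using det_nonzero_imp_inverse[OF carr(3) \<open>det P \<noteq> 0\<close>] by blast
  have "A = A * P * Q"
    using carr Q by (simp add: assoc_mult_mat[of A n n P n Q n])
  also have "\<dots> = P * C * Q"
    by (simp only: AP)
  finally show ?thesis
    using carr Q by (intro similar_matI[of _ _ P Q n]) auto
qed

lemma coordinates_in_basis3:
  fixes u :: "'a::field vec"
  assumes carr: "u \<in> carrier_vec 3" "w \<in> carrier_vec 3" "t \<in> carrier_vec 3" "z \<in> carrier_vec 3"
    and "det (mat_of_cols 3 [u, w, t]) \<noteq> 0"
  obtains a b c where "z = a \<cdot>\<^sub>v u + b \<cdot>\<^sub>v w + c \<cdot>\<^sub>v t"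
proof -
  let ?P = "mat_of_cols 3 [u, w, t]"
  obtain Q where Q: "Q \<in> carrier_mat 3 3" "?P * Q = 1\<^sub>m 3"
    using det_nonzero_imp_inverse[OF _ assms(5)] by (metis mat_of_cols_3_carrier)
  obtain a b c where abc: "Q *\<^sub>v z = vec3 a b c"
    using Q carr by (metis mult_mat_vec_carrier vec3_cases)
  have "?P *\<^sub>v vec3 a b c = (?P * Q) *\<^sub>v z"
    unfolding abc[symmetric] by (rule assoc_mult_mat_vec[symmetric, OF mat_of_cols_3_carrier Q(1) carr(4)])
  then have "z = a \<cdot>\<^sub>v u + b \<cdot>\<^sub>v w + c \<cdot>\<^sub>v t"
    using Q(2) carr by (simp add: mat_of_cols_mult_vec3)
  then show ?thesis ..
qed

lemma similar_mat_square_zero_decomposition: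
  fixes C :: "'a::comm_ring_1 mat"
  assumes "similar_mat B C" and carr: "N \<in> carrier_mat n n" "D \<in> carrier_mat n n"
    and "C = N + D" and NN: "N * N = 0\<^sub>m n n" and "similar_mat D L"
  shows "\<exists>N' D'. N' \<in> carrier_mat n n \<and> D' \<in> carrier_mat n n \<and>
    B = N' + D' \<and> N' * N' = 0\<^sub>m n n \<and> similar_mat D' L"
proof -
  from similar_matD[OF assms(1)] obtain m P Q where
    PQ: "{B, C, P, Q} \<subseteq> carrier_mat m m" "P * Q = 1\<^sub>m m" "Q * P = 1\<^sub>m m" "B = P * C * Q"
    by blast
  have "m = n"
    using PQ(1) carr \<open>C = N + D\<close> by auto
  with PQ have P: "P \<in> carrier_mat n n" and Q: "Q \<in> carrier_mat n n"
    and QP: "Q * P = 1\<^sub>m n" by auto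
  note [simp] = assoc_mult_mat[of _ n n _ n _ n]
  show ?thesis
  proof (intro exI conjI)
    show "B = P * N * Q + P * D * Q"
      using PQ(4) P Q carr \<open>C = N + D\<close>
      by (simp add: mult_add_distrib_mat add_mult_distrib_mat[of _ n n _ _ n])
    have "P * N * Q * (P * N * Q) = P * (N * (Q * P) * N) * Q"
      using P Q carr by simp
    also have "\<dots> = P * (N * N) * Q"
      unfolding QP using carr by simp
    finally show "P * N * Q * (P * N * Q) = 0\<^sub>m n n"
      using P Q by (simp add: NN)
    have "similar_mat (P * D * Q) D"
      using PQ P Q carr \<open>m = n\<close> by (intro similar_matI[of _ _ P Q n]) auto
    then show "similar_mat (P * D * Q) L"
      using \<open>similar_mat D L\<close> by (rule similar_mat_trans)
  qed (use P Q carr in auto)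
qed

text \<open>The companion matrix of x^3 - c2 x^2 - c1 x - c0.\<close>

definition companion3 :: "'a::zero_neq_one \<Rightarrow> 'a \<Rightarrow> 'a \<Rightarrow> 'a mat" where
  "companion3 c0 c1 c2 = mat3 0 0 c0 1 0 c1 0 1 c2"

lemma companion3_carrier [simp]: "companion3 c0 c1 c2 \<in> carrier_mat 3 3"
  by (simp add: companion3_def)

lemma mat_trace_companion3: "mat_trace (companion3 c0 c1 c2) = c2"
  by (simp add: companion3_def mat_trace_def sum_lessThan_3)

lemma companion3_diff_square:
  fixes c0 :: "'a::comm_ring_1"
  shows "(companion3 c0 c1 c2 - companion3 d0 d1 c2) * (companion3 c0 c1 c2 - companion3 d0 d1 c2)
    = 0\<^sub>m 3 3"
  by (simp add: companion3_def mat3_simps)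

text \<open>The rows (1, l, l^2) of the Vandermonde matrix are left eigenvectors of the companion matrix.\<close>

lemma similar_companion3_diag:
  fixes l1 :: "'a::field"
  assumes "l1 \<noteq> l2" "l1 \<noteq> l3" "l2 \<noteq> l3"
  shows "similar_mat (companion3 (l1*l2*l3) (- (l1*l2 + l1*l3 + l2*l3)) (l1 + l2 + l3))
    (mat3 l1 0 0 0 l2 0 0 0 l3)"
proof -
  define W where "W = mat3 1 l1 (l1*l1) 1 l2 (l2*l2) 1 l3 (l3*l3)"
  have "det W = (l2 - l1) * (l3 - l1) * (l3 - l2)"
    unfolding W_def by (simp add: mat3_simps)
  then have "det W \<noteq> 0"
    using assms by simp
  moreover have "mat3 l1 0 0 0 l2 0 0 0 l3 * W =
      W * companion3 (l1*l2*l3) (- (l1*l2 + l1*l3 + l2*l3)) (l1 + l2 + l3)"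
    unfolding W_def companion3_def by (simp add: algebra_simps)
  ultimately have "similar_mat (mat3 l1 0 0 0 l2 0 0 0 l3)
      (companion3 (l1*l2*l3) (- (l1*l2 + l1*l3 + l2*l3)) (l1 + l2 + l3))"
    by (intro similar_mat_of_mult_eq[of _ 3 _ W]) (auto simp: W_def)
  then show ?thesis
    by (rule similar_mat_sym)
qed

definition krylov3 :: "'a::semiring_0 mat \<Rightarrow> 'a vec \<Rightarrow> 'a mat" where
  "krylov3 A v = mat_of_cols 3 [v, A *\<^sub>v v, A *\<^sub>v (A *\<^sub>v v)]"

lemma krylov3_carrier [simp]: "krylov3 A v \<in> carrier_mat 3 3"
  by (simp add: krylov3_def)

lemma similar_companion3_of_cyclic:
  fixes A :: "'a::field mat"
  assumes A: "A \<in> carrier_mat 3 3" and v: "v \<in> carrier_vec 3" and "det (krylov3 A v) \<noteq> 0"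
  obtains c0 c1 c2 where "similar_mat A (companion3 c0 c1 c2)"
proof -
  let ?v1 = "A *\<^sub>v v" and ?v2 = "A *\<^sub>v (A *\<^sub>v v)" and ?v3 = "A *\<^sub>v (A *\<^sub>v (A *\<^sub>v v))"
  have carr: "?v1 \<in> carrier_vec 3" "?v2 \<in> carrier_vec 3" "?v3 \<in> carrier_vec 3"
    using A v by auto
  obtain c0 c1 c2 where v3: "?v3 = c0 \<cdot>\<^sub>v v + c1 \<cdot>\<^sub>v ?v1 + c2 \<cdot>\<^sub>v ?v2"
    using coordinates_in_basis3[OF v carr] assms(3) unfolding krylov3_def by blast
  have "A * krylov3 A v = mat_of_cols 3 [?v1, ?v2, ?v3]"
    unfolding krylov3_def using A v carr by (simp add: mult_mat_of_cols)
  also have "\<dots> = krylov3 A v * companion3 c0 c1 c2"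
    unfolding v3 krylov3_def companion3_def using v carr
    by (elim vec3_cases) (simp add: mat3_simps)
  finally have "similar_mat A (companion3 c0 c1 c2)"
    using A assms(3) by (intro similar_mat_of_mult_eq[of _ 3 _ "krylov3 A v"]) auto
  then show ?thesis ..
qed

lemma degree_quadratic_le: "degree [:c0, c1, c2:] \<le> 2"
  using degree_pCons_le[of c0 "[:c1, c2:]"] degree_pCons_le[of c1 "[:c2:]"] by simp

lemma mat_poly_eval_quadratic:
  fixes A :: "'a::comm_ring_1 mat"
  assumes A: "A \<in> carrier_mat n n"
  shows "mat_poly_eval [:c0, c1, c2:] A = c0 \<cdot>\<^sub>m 1\<^sub>m n + c1 \<cdot>\<^sub>m A + c2 \<cdot>\<^sub>m (A * A)"
proof (rule eq_matI)
  fix i j assume "i < dim_row (c0 \<cdot>\<^sub>m 1\<^sub>m n + c1 \<cdot>\<^sub>m A + c2 \<cdot>\<^sub>m (A * A))"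
    "j < dim_col (c0 \<cdot>\<^sub>m 1\<^sub>m n + c1 \<cdot>\<^sub>m A + c2 \<cdot>\<^sub>m (A * A))"
  then have ij: "i < n" "j < n"
    using A by auto
  let ?q = "[:c0, c1, c2:]"
  have "(\<Sum>k\<le>degree ?q. coeff ?q k * (A ^\<^sub>m k) $$ (i,j)) =
      (\<Sum>k\<le>2. coeff ?q k * (A ^\<^sub>m k) $$ (i,j))"
    using degree_quadratic_le[of c0 c1 c2] by (intro sum.mono_neutral_left) (auto simp: coeff_eq_0)
  then show "mat_poly_eval ?q A $$ (i,j) = (c0 \<cdot>\<^sub>m 1\<^sub>m n + c1 \<cdot>\<^sub>m A + c2 \<cdot>\<^sub>m (A * A)) $$ (i,j)"
    using A ij by (simp add: mat_poly_eval_def numeral_2_eq_2)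
qed (use A in \<open>auto simp: mat_poly_eval_def\<close>)

lemma non_derogative_annihilator_degree:
  fixes A :: "'a::field mat"
  assumes A: "A \<in> carrier_mat n n" and "non_derogative A"
    and "q \<noteq> 0" and "mat_poly_eval q A = 0\<^sub>m n n"
  shows "n \<le> degree q"
  using assms degree_monic_char_poly[OF A]
  unfolding non_derogative_def is_minimal_polynomial_def by auto

lemma non_derogative3_no_quadratic_annihilator:
  fixes A :: "'a::field mat"
  assumes A: "A \<in> carrier_mat 3 3" and "non_derogative A"
    and "c0 \<cdot>\<^sub>m 1\<^sub>m 3 + c1 \<cdot>\<^sub>m A + c2 \<cdot>\<^sub>m (A * A) = 0\<^sub>m 3 3"
  shows "c0 = 0 \<and> c1 = 0 \<and> c2 = 0"
proof (rule ccontr)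
  assume "\<not> ?thesis"
  then have "[:c0, c1, c2:] \<noteq> 0"
    by auto
  then have "3 \<le> degree [:c0, c1, c2:]"
    using assms by (intro non_derogative_annihilator_degree[OF A]) (simp_all add: mat_poly_eval_quadratic)
  with degree_quadratic_le[of c0 c1 c2] show False
    by simp
qed

definition independent_pair3 :: "'a::field vec \<Rightarrow> 'a vec \<Rightarrow> bool" where
  "independent_pair3 u w \<longleftrightarrow>
     u$1*w$2 - u$2*w$1 \<noteq> 0 \<or> u$2*w$0 - u$0*w$2 \<noteq> 0 \<or> u$0*w$1 - u$1*w$0 \<noteq> 0"

lemma exists_independent_pair3:
  fixes A :: "'a::field mat"
  assumes A: "A \<in> carrier_mat 3 3" and not_scalar: "\<And>c. A \<noteq> c \<cdot>\<^sub>m 1\<^sub>m 3"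
  shows "\<exists>v \<in> carrier_vec 3. independent_pair3 v (A *\<^sub>v v)"
proof (rule ccontr)
  assume "\<not> ?thesis"
  then have dep: "\<And>x y z. \<not> independent_pair3 (vec3 x y z) (A *\<^sub>v vec3 x y z)"
    by auto
  obtain a b c d e f g h k where A_eq: "A = mat3 a b c d e f g h k"
    using A by (rule mat3_cases)
  from dep[of 1 0 0] dep[of 0 1 0] dep[of 0 0 1]
  have "b = 0" "c = 0" "d = 0" "f = 0" "g = 0" "h = 0"
    by (auto simp: independent_pair3_def A_eq)
  moreover from this dep[of 1 1 0] dep[of 1 0 1] have "e = a" "k = a"
    by (auto simp: independent_pair3_def A_eq)
  ultimately have "A = a \<cdot>\<^sub>m 1\<^sub>m 3"
    by (simp add: A_eq one_mat_3)
  with not_scalar show False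
    by blast
qed

lemma independent_pair3_lin_indep:
  fixes u :: "'a::field vec"
  assumes "u \<in> carrier_vec 3" "w \<in> carrier_vec 3" "independent_pair3 u w"
    and "x \<cdot>\<^sub>v u + y \<cdot>\<^sub>v w = 0\<^sub>v 3"
  shows "x = 0 \<and> y = 0"
proof -
  obtain u0 u1 u2 w0 w1 w2 where uw: "u = vec3 u0 u1 u2" "w = vec3 w0 w1 w2"
    using assms(1,2) by (metis vec3_cases)
  have e: "x*u0 + y*w0 = 0" "x*u1 + y*w1 = 0" "x*u2 + y*w2 = 0"
    using assms(4) by (simp_all add: uw zero_vec_3)
  have minor: "x * (ui*wj - uj*wi) = 0 \<and> y * (ui*wj - uj*wi) = 0"
    if "x*ui + y*wi = 0" "x*uj + y*wj = 0" for ui uj wi wj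
  proof -
    have "x * (ui*wj - uj*wi) = wj * (x*ui + y*wi) - wi * (x*uj + y*wj)"
      "y * (ui*wj - uj*wi) = ui * (x*uj + y*wj) - uj * (x*ui + y*wi)"
      by (simp_all add: algebra_simps)
    then show ?thesis
      by (simp add: that)
  qed
  from minor[OF e(2,3)] minor[OF e(3,1)] minor[OF e(1,2)]
  show ?thesis
    using assms(3) by (auto simp: independent_pair3_def uw)
qed

lemma span_of_det_zero3:
  fixes u :: "'a::field vec"
  assumes carr: "u \<in> carrier_vec 3" "w \<in> carrier_vec 3" "z \<in> carrier_vec 3"
    and "independent_pair3 u w" and "det (mat_of_cols 3 [u, w, z]) = 0"
  shows "\<exists>r s. z = r \<cdot>\<^sub>v u + s \<cdot>\<^sub>v w"
proof -
  obtain x where "x \<in> carrier_vec 3" "x \<noteq> 0\<^sub>v 3" "mat_of_cols 3 [u, w, z] *\<^sub>v x = 0\<^sub>v 3"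
    using assms(5) det_0_iff_vec_prod_zero_field[of "mat_of_cols 3 [u, w, z]" 3] by auto
  then obtain a b c where "vec3 a b c \<noteq> 0\<^sub>v 3" and rel: "a \<cdot>\<^sub>v u + b \<cdot>\<^sub>v w + c \<cdot>\<^sub>v z = 0\<^sub>v 3"
    using carr by (metis vec3_cases mat_of_cols_mult_vec3)
  obtain u0 u1 u2 w0 w1 w2 z0 z1 z2 where
    uwz: "u = vec3 u0 u1 u2" "w = vec3 w0 w1 w2" "z = vec3 z0 z1 z2"
    using carr by (metis vec3_cases)
  have "c \<noteq> 0"
  proof
    assume "c = 0"
    then have "a \<cdot>\<^sub>v u + b \<cdot>\<^sub>v w = 0\<^sub>v 3"
      using rel by (simp add: uwz zero_vec_3)
    then show False
      using independent_pair3_lin_indep[OF carr(1,2) assms(4)] \<open>c = 0\<close> \<open>vec3 a b c \<noteq> 0\<^sub>v 3\<close>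
      by (auto simp: zero_vec_3)
  qed
  have "z = (- a / c) \<cdot>\<^sub>v u + (- b / c) \<cdot>\<^sub>v w"
    using rel \<open>c \<noteq> 0\<close> unfolding uwz zero_vec_3
    by (simp add: field_simps) (auto simp: eq_neg_iff_add_eq_0 ac_simps)
  then show ?thesis
    by blast
qed

lemma exists_mult_vec_nonzero:
  fixes A :: "'a::semiring_1 mat"
  assumes "A \<in> carrier_mat n m" "A \<noteq> 0\<^sub>m n m"
  shows "\<exists>w \<in> carrier_vec m. A *\<^sub>v w \<noteq> 0\<^sub>v n"
proof -
  obtain i j where ij: "i < n" "j < m" "A $$ (i,j) \<noteq> 0"
    using assms by (metis eq_matI carrier_matD index_zero_mat)
  have "(A *\<^sub>v unit_vec m j) $ i = A $$ (i,j)"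
    using assms(1) ij by simp
  then show ?thesis
    using ij by (intro bexI[of _ "unit_vec m j"]) auto
qed

lemma quadratic_mat_mult_vec3:
  fixes A :: "'a::comm_ring_1 mat"
  assumes "A \<in> carrier_mat 3 3" "u \<in> carrier_vec 3"
  shows "(c0 \<cdot>\<^sub>m 1\<^sub>m 3 + c1 \<cdot>\<^sub>m A + c2 \<cdot>\<^sub>m (A * A)) *\<^sub>v u =
    c0 \<cdot>\<^sub>v u + c1 \<cdot>\<^sub>v (A *\<^sub>v u) + c2 \<cdot>\<^sub>v (A *\<^sub>v (A *\<^sub>v u))"
  using assms by (elim mat3_cases vec3_cases) (simp add: mat3_simps)

lemma quadratic_mat_conj:
  fixes A :: "'a::comm_ring_1 mat"
  assumes carr: "A \<in> carrier_mat n n" "P \<in> carrier_mat n n" "M \<in> carrier_mat n n"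
    and AP: "A * P = P * M"
  shows "(c0 \<cdot>\<^sub>m 1\<^sub>m n + c1 \<cdot>\<^sub>m A + c2 \<cdot>\<^sub>m (A * A)) * P =
    P * (c0 \<cdot>\<^sub>m 1\<^sub>m n + c1 \<cdot>\<^sub>m M + c2 \<cdot>\<^sub>m (M * M))"
proof -
  note [simp] = assoc_mult_mat[of _ n n _ n _ n]
  have "A * A * P = P * (M * M)"
    using carr by (simp flip: AP) (simp add: AP flip: assoc_mult_mat[of A n n P n M n])
  then show ?thesis
    using carr AP
    by (simp add: add_mult_distrib_mat[of _ n n _ _ n] mult_add_distrib_mat[of _ n n _ n]
        mult_smult_distrib[of _ n n _ n] mult_smult_assoc_mat[of _ n n _ n])
qed

lemma mat_mult_vec_conj:
  fixes A :: "'a::comm_ring_1 mat"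
  assumes "A \<in> carrier_mat n n" "P \<in> carrier_mat n n" "M \<in> carrier_mat n n"
    and "A * P = P * M" and "u \<in> carrier_vec n"
  shows "A *\<^sub>v (P *\<^sub>v u) = P *\<^sub>v (M *\<^sub>v u)"
  using assms by (metis assoc_mult_mat_vec)

lemma krylov3_conj:
  fixes A :: "'a::comm_ring_1 mat"
  assumes carr: "A \<in> carrier_mat 3 3" "P \<in> carrier_mat 3 3" "M \<in> carrier_mat 3 3"
    and AP: "A * P = P * M" and u: "u \<in> carrier_vec 3"
  shows "krylov3 A (P *\<^sub>v u) = P * krylov3 M u"
  using carr u
  by (simp add: krylov3_def mult_mat_of_cols mat_mult_vec_conj[OF carr AP])

lemma mult_mat_vec_lin_comb:
  fixes A :: "'a::field mat"
  assumes "A \<in> carrier_mat n m" "u \<in> carrier_vec m" "w \<in> carrier_vec m"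
  shows "A *\<^sub>v (r \<cdot>\<^sub>v u + s \<cdot>\<^sub>v w) = r \<cdot>\<^sub>v (A *\<^sub>v u) + s \<cdot>\<^sub>v (A *\<^sub>v w)"
  using assms by (simp add: mult_add_distrib_mat_vec[of A n m] mult_mat_vec)

text \<open>
  The vector (x, y, 1) is cyclic for the block triangular matrix iff its image (z1, z2, 0)
  under M - la is cyclic for the upper left 2 \<times> 2 block, whose Krylov determinant is the
  quadratic form below.
\<close>

lemma det_krylov3_block_triangular:
  fixes r s al be la x y :: "'a::comm_ring_1"
  defines "z1 \<equiv> al - la*x + r*y" and "z2 \<equiv> be + x + (s - la)*y"
  shows "det (krylov3 (mat3 0 r al 1 s be 0 0 la) (vec3 x y 1)) = z1*z1 + s*z1*z2 - r*z2*z2"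
  unfolding krylov3_def z1_def z2_def by (simp add: mat3_simps)

lemma exists_cyclic_vector_block_triangular3:
  fixes r s al be la :: "'a::field"
  defines "M \<equiv> mat3 0 r al 1 s be 0 0 la"
  assumes "((-r) \<cdot>\<^sub>m 1\<^sub>m 3 + (-s) \<cdot>\<^sub>m M + 1 \<cdot>\<^sub>m (M * M)) *\<^sub>v vec3 0 0 1 \<noteq> 0\<^sub>v 3"
  shows "\<exists>x y. det (krylov3 M (vec3 x y 1)) \<noteq> 0"
proof -
  have cond: "r*be + al*la - s*al \<noteq> 0 \<or> al + be*la \<noteq> 0 \<or> la*la - s*la - r \<noteq> 0"
    using assms(2) unfolding M_def by (simp add: mat3_simps)
  define p where "p = la*la - s*la - r"
  show ?thesis
  proof (cases "p = 0")
    case False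
    \<comment> \<open>solve z1 = 1, z2 = 0: the image e1 is cyclic for the 2 \<times> 2 block\<close>
    define x where "x = ((1 - al)*(s - la) + r*be) / p"
    define y where "y = (la*be - 1 + al) / p"
    have "(al - la*x + r*y) * p = al * p - la * ((1 - al)*(s - la) + r*be) + r * (la*be - 1 + al)"
      "(be + x + (s - la)*y) * p = be * p + ((1 - al)*(s - la) + r*be) + (s - la) * (la*be - 1 + al)"
      unfolding x_def y_def using False by (simp_all add: field_simps)
    then have "(al - la*x + r*y) * p = 1 * p" "(be + x + (s - la)*y) * p = 0 * p"
      unfolding p_def by (simp_all add: algebra_simps)
    then have "al - la*x + r*y = 1" "be + x + (s - la)*y = 0"
      using False by simp_all
    then have "det (krylov3 M (vec3 x y 1)) = 1"
      unfolding M_def by (simp add: det_krylov3_block_triangular)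
    then show ?thesis
      by (intro exI[of _ x] exI[of _ y]) simp
  next
    case True
    show ?thesis
    proof (rule ccontr)
      assume "\<not> ?thesis"
      then have H: "\<And>x y. det (krylov3 M (vec3 x y 1)) = 0"
        by blast
      from H[of 0 0] have h0: "al*al + s*al*be - r*be*be = 0"
        unfolding M_def det_krylov3_block_triangular by simp
      from H[of 1 0] have h1: "(al - la)*(al - la) + s*(al - la)*(be + 1) - r*(be + 1)*(be + 1) = 0"
        unfolding M_def det_krylov3_block_triangular by simp
      have "(al + la*be)^2 = (al*al + s*al*be - r*be*be)
          - be * (((al - la)*(al - la) + s*(al - la)*(be + 1) - r*(be + 1)*(be + 1))
                  - (al*al + s*al*be - r*be*be) - p) + be*be*p"
        unfolding p_def by (simp add: algebra_simps power2_eq_square)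
      then have "(al + la*be)^2 = 0"
        by (simp only: h0 h1 True) simp
      then have "al = - la*be"
        by (simp add: algebra_simps add_eq_0_iff2)
      moreover have "r*be + al*la - s*al = - be * p" if "al = - la*be"
        unfolding that p_def by (simp add: algebra_simps)
      ultimately show False
        using cond True unfolding p_def by (simp add: algebra_simps)
    qed
  qed
qed

lemma exists_cyclic_vector_of_invariant_plane3:
  fixes A :: "'a::field mat"
  assumes A: "A \<in> carrier_mat 3 3" and v: "v \<in> carrier_vec 3" and w: "w \<in> carrier_vec 3"
    and basis: "det (mat_of_cols 3 [v, A *\<^sub>v v, w]) \<noteq> 0"
    and AAv: "A *\<^sub>v (A *\<^sub>v v) = r \<cdot>\<^sub>v v + s \<cdot>\<^sub>v (A *\<^sub>v v)"
    and pw: "((-r) \<cdot>\<^sub>m 1\<^sub>m 3 + (-s) \<cdot>\<^sub>m A + 1 \<cdot>\<^sub>m (A * A)) *\<^sub>v w \<noteq> 0\<^sub>v 3"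
  shows "\<exists>u \<in> carrier_vec 3. det (krylov3 A u) \<noteq> 0"
proof -
  define P where "P = mat_of_cols 3 [v, A *\<^sub>v v, w]"
  have P: "P \<in> carrier_mat 3 3"
    by (simp add: P_def)
  have Av: "A *\<^sub>v v \<in> carrier_vec 3" and Aw: "A *\<^sub>v w \<in> carrier_vec 3"
    using A v w by auto
  obtain al be la where Aw_eq: "A *\<^sub>v w = al \<cdot>\<^sub>v v + be \<cdot>\<^sub>v (A *\<^sub>v v) + la \<cdot>\<^sub>v w"
    using coordinates_in_basis3[OF v Av w Aw basis] by blast
  define M where "M = mat3 0 r al 1 s be 0 0 la"
  have M: "M \<in> carrier_mat 3 3"
    by (simp add: M_def)
  have "A * P = mat_of_cols 3 [A *\<^sub>v v, A *\<^sub>v (A *\<^sub>v v), A *\<^sub>v w]"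
    unfolding P_def using A v w Av by (simp add: mult_mat_of_cols)
  also have "\<dots> = P * M"
    unfolding AAv Aw_eq P_def M_def using v w Av by (elim vec3_cases) (simp add: mat3_simps)
  finally have AP: "A * P = P * M" .
  have Pe3: "P *\<^sub>v vec3 0 0 1 = w"
    unfolding P_def using v w Av by (elim vec3_cases) (simp add: mat3_simps)
  have "((-r) \<cdot>\<^sub>m 1\<^sub>m 3 + (-s) \<cdot>\<^sub>m M + 1 \<cdot>\<^sub>m (M * M)) *\<^sub>v vec3 0 0 1 \<noteq> 0\<^sub>v 3"
  proof
    assume "((-r) \<cdot>\<^sub>m 1\<^sub>m 3 + (-s) \<cdot>\<^sub>m M + 1 \<cdot>\<^sub>m (M * M)) *\<^sub>v vec3 0 0 1 = 0\<^sub>v 3"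
    then have "(((-r) \<cdot>\<^sub>m 1\<^sub>m 3 + (-s) \<cdot>\<^sub>m A + 1 \<cdot>\<^sub>m (A * A)) * P) *\<^sub>v vec3 0 0 1 = 0\<^sub>v 3"
      using P M by (simp add: quadratic_mat_conj[OF A P M AP] assoc_mult_mat_vec[of P 3 3 _ 3])
        (elim mat3_cases, simp add: zero_vec_3)
    with pw show False
      using A P by (simp add: assoc_mult_mat_vec[of _ 3 3 P 3] Pe3)
  qed
  then obtain x y where "det (krylov3 M (vec3 x y 1)) \<noteq> 0"
    unfolding M_def using exists_cyclic_vector_block_triangular3 by blast
  moreover have "det (krylov3 A (P *\<^sub>v vec3 x y 1)) = det P * det (krylov3 M (vec3 x y 1))"
    unfolding krylov3_conj[OF A P M AP vec3_carrier] by (rule det_mult[OF P krylov3_carrier])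
  ultimately show ?thesis
    using basis[folded P_def] P by (intro bexI[of _ "P *\<^sub>v vec3 x y 1"]) auto
qed

lemma exists_cyclic_vector3:
  fixes A :: "'a::field mat"
  assumes A: "A \<in> carrier_mat 3 3" and nd: "non_derogative A"
  shows "\<exists>v \<in> carrier_vec 3. det (krylov3 A v) \<noteq> 0"
proof (rule ccontr)
  assume no_cyclic: "\<not> ?thesis"
  have "A \<noteq> c \<cdot>\<^sub>m 1\<^sub>m 3" for c
  proof
    assume "A = c \<cdot>\<^sub>m 1\<^sub>m 3"
    then have "(-c) \<cdot>\<^sub>m 1\<^sub>m 3 + 1 \<cdot>\<^sub>m A + 0 \<cdot>\<^sub>m (A * A) = 0\<^sub>m 3 3"
      by (simp add: mat3_simps)
    from non_derogative3_no_quadratic_annihilator[OF A nd this] show False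
      by simp
  qed
  then obtain v where v: "v \<in> carrier_vec 3" and indep: "independent_pair3 v (A *\<^sub>v v)"
    using exists_independent_pair3[OF A] by blast
  have Av: "A *\<^sub>v v \<in> carrier_vec 3" and AAv: "A *\<^sub>v (A *\<^sub>v v) \<in> carrier_vec 3"
    using A v by auto
  obtain r s where AAv_eq: "A *\<^sub>v (A *\<^sub>v v) = r \<cdot>\<^sub>v v + s \<cdot>\<^sub>v (A *\<^sub>v v)"
    using span_of_det_zero3[OF v Av AAv indep] no_cyclic v unfolding krylov3_def by auto
  define pA where "pA = (-r) \<cdot>\<^sub>m 1\<^sub>m 3 + (-s) \<cdot>\<^sub>m A + 1 \<cdot>\<^sub>m (A * A)"
  have pA: "pA \<in> carrier_mat 3 3"
    using A by (simp add: pA_def)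
  have "pA \<noteq> 0\<^sub>m 3 3"
    using non_derogative3_no_quadratic_annihilator[OF A nd, of "-r" "-s" 1] by (auto simp: pA_def)
  then obtain w where w: "w \<in> carrier_vec 3" and pw: "pA *\<^sub>v w \<noteq> 0\<^sub>v 3"
    using exists_mult_vec_nonzero[OF pA] by blast
  have "pA *\<^sub>v v = 0\<^sub>v 3" "pA *\<^sub>v (A *\<^sub>v v) = 0\<^sub>v 3"
    unfolding pA_def quadratic_mat_mult_vec3[OF A v] quadratic_mat_mult_vec3[OF A Av] AAv_eq
      mult_mat_vec_lin_comb[OF A v Av]
    using v Av by (elim vec3_cases; simp add: mat3_simps)+
  then have "det (mat_of_cols 3 [v, A *\<^sub>v v, w]) \<noteq> 0"
    using span_of_det_zero3[OF v Av w indep] pw mult_mat_vec_lin_comb[OF pA v Av]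
    by (auto simp: zero_vec_3)
  then have "\<exists>u \<in> carrier_vec 3. det (krylov3 A u) \<noteq> 0"
    using exists_cyclic_vector_of_invariant_plane3[OF A v w _ AAv_eq] pw unfolding pA_def by blast
  with no_cyclic show False ..
qed

text \<open>The hypothesis on the size of the field only ensures that an admissible a exists.\<close>

theorem proposition2p3:
  fixes B :: "'a :: field mat" and u2 :: 'a
  assumes "CHAR('a) = 2"
    and "infinite (UNIV :: 'a set) \<or> card (UNIV :: 'a set) \<ge> 4"
    and "B \<in> carrier_mat 3 3"
    and "non_derogative B"
    and "mat_trace B = u2"
  shows "\<forall>a :: 'a. a \<noteq> u2 \<and> a \<noteq> u2 + 1 \<longrightarrow>
    (\<exists>N D. N \<in> carrier_mat 3 3 \<and> D \<in> carrier_mat 3 3 \<and>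
       B = N + D \<and> N * N = 0\<^sub>m 3 3 \<and>
       similar_mat D (mat_diag 3 (\<lambda>i. [a, a + 1, u2 + 1] ! i)))"
proof (intro allI impI)
  fix a :: 'a
  assume a: "a \<noteq> u2 \<and> a \<noteq> u2 + 1"
  obtain v where "v \<in> carrier_vec 3" "det (krylov3 B v) \<noteq> 0"
    using exists_cyclic_vector3[OF assms(3,4)] by blast
  then obtain c0 c1 c2 where B_C: "similar_mat B (companion3 c0 c1 c2)"
    using similar_companion3_of_cyclic[OF assms(3)] by metis
  have "c2 = u2"
    using mat_trace_similar[OF B_C] assms(5) by (simp add: mat_trace_companion3)
  have "a + (a + 1) + (u2 + 1) = u2 + 2 * (a + 1)"
    by (simp only: mult_2) (simp add: algebra_simps)
  also have "(2::'a) = 0"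
    using assms(1) by (metis of_nat_CHAR of_nat_numeral)
  finally have eigenvalue_sum: "a + (a + 1) + (u2 + 1) = u2"
    by simp
  define C' where "C' = companion3 (a * (a + 1) * (u2 + 1))
      (- (a * (a + 1) + a * (u2 + 1) + (a + 1) * (u2 + 1))) u2"
  have "similar_mat C' (mat_diag 3 (\<lambda>i. [a, a + 1, u2 + 1] ! i))"
    using similar_companion3_diag[of a "a + 1" "u2 + 1", unfolded eigenvalue_sum] a
    by (simp add: C'_def mat_diag_3 numeral_2_eq_2)
  moreover have "companion3 c0 c1 u2 = (companion3 c0 c1 u2 - C') + C'"
    by (simp add: C'_def companion3_def)
  ultimately show "\<exists>N D. N \<in> carrier_mat 3 3 \<and> D \<in> carrier_mat 3 3 \<and>
       B = N + D \<and> N * N = 0\<^sub>m 3 3 \<and> similar_mat D (mat_diag 3 (\<lambda>i. [a, a + 1, u2 + 1] ! i))"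
    using B_C \<open>c2 = u2\<close> companion3_diff_square[of c0 c1 u2]
    by (intro similar_mat_square_zero_decomposition[where N = "companion3 c0 c1 u2 - C'" and D = C'])
      (auto simp: C'_def minus_carrier_mat)
qed

end
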